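(* Let $X$ be a topological space, $G$ a group and $\varphi\colon G\times X\to X$ a continuous action that is cocompactly expansive. Let $H\le G$ be a syndetic subgroup. Then the restricted action $\varphi|_{H\times X}\colon H\times X\to X$ is continuous and cocompactly expansive.
   Context: Write $g\cdot x=\varphi(g,x)$. For a family $\mathcal U$ of subsets of $X$ and $A\subseteq X$, write $A\prec\mathcal U$ if $A\subseteq U$ for some $U\in\mathcal U$. The action is cocompactly expansive if there exist a finite open cover $\mathcal U$ of $X$ and a compact set $K\subseteq X$ such that (1) $G\cdot K=X$, and (2) whenever $x,y\in X$ satisfy $\{g\cdot x,g\cdot y\}\prec\mathcal U\cup\{X\setminus K\}$ for every $g\in G$, then $x=y$. (Equivalently, for all $x\neq y$ there is $g$ with $\{g\cdot x,g\cdot y\}\cap K\neq\emptyset$ and $\{g\cdot x,g\cdot y\}$ not contained in any member of $\mathcal U$.) A subgroup $H\le G$ is syndetic if there is a finite set $F\subseteq G$ with $G=FH$. *)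

theory Defs
  imports "HOL-Analysis.Analysis" "HOL-Algebra.Group"
begin

definition continuous_action :: "('a, 'c) monoid_scheme \<Rightarrow> 'b topology \<Rightarrow> ('a \<Rightarrow> 'b \<Rightarrow> 'b) \<Rightarrow> bool" where
  "continuous_action G X phi \<longleftrightarrow>
     (\<forall>g\<in>carrier G. \<forall>x\<in>topspace X. phi g x \<in> topspace X) \<and>
     (\<forall>x\<in>topspace X. phi \<one>\<^bsub>G\<^esub> x = x) \<and>
     (\<forall>g\<in>carrier G. \<forall>h\<in>carrier G. \<forall>x\<in>topspace X.
        phi (g \<otimes>\<^bsub>G\<^esub> h) x = phi g (phi h x)) \<and>
     continuous_map (prod_topology (discrete_topology (carrier G)) X) X (\<lambda>(g, x). phi g x)"

definition subordinate :: "'b set \<Rightarrow> 'b set set \<Rightarrow> bool" where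
  "subordinate A \<U> \<longleftrightarrow> (\<exists>U\<in>\<U>. A \<subseteq> U)"

definition cocompactly_expansive :: "('a, 'c) monoid_scheme \<Rightarrow> 'b topology \<Rightarrow> ('a \<Rightarrow> 'b \<Rightarrow> 'b) \<Rightarrow> bool" where
  "cocompactly_expansive G X phi \<longleftrightarrow>
     (\<exists>\<U> K. finite \<U> \<and> (\<forall>U\<in>\<U>. openin X U) \<and> \<Union>\<U> = topspace X \<and>
        compactin X K \<and>
        {phi g x | g x. g \<in> carrier G \<and> x \<in> K} = topspace X \<and>
        (\<forall>x\<in>topspace X. \<forall>y\<in>topspace X.
           (\<forall>g\<in>carrier G. subordinate {phi g x, phi g y} (\<U> \<union> {topspace X - K})) \<longrightarrow> x = y))"

definition syndetic :: "('a, 'c) monoid_scheme \<Rightarrow> 'a set \<Rightarrow> bool" where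
  "syndetic G H \<longleftrightarrow>
     (\<exists>F. finite F \<and> F \<subseteq> carrier G \<and> carrier G = {f \<otimes>\<^bsub>G\<^esub> h | f h. f \<in> F \<and> h \<in> H})"

end

theory Submission
  imports Defs
begin

text \<open>Write \<open>G = F H\<close> with \<open>F\<close> finite, replace \<open>\<U>\<close> by the common refinement \<open>\<V>\<close> of
  the covers \<open>f\<^sup>-\<^sup>1 \<U>\<close> (\<open>f \<in> F\<close>) and \<open>K\<close> by \<open>K' = \<Union>\<^sub>f\<^sub>\<in>\<^sub>F f\<^sup>-\<^sup>1 K\<close>. If
  \<open>{h x, h y} \<prec> \<V> \<union> {X - K'}\<close>, then \<open>{f h x, f h y} \<prec> \<U> \<union> {X - K}\<close> for every \<open>f \<in> F\<close>;
  as every \<open>g \<in> G\<close> is some \<open>f h\<close>, expansivity of \<open>G\<close> for \<open>(\<U>, K)\<close> gives expansivity of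
  \<open>H\<close> for \<open>(\<V>, K')\<close>. Since also \<open>G = H F\<^sup>-\<^sup>1\<close>, the \<open>H\<close>-translates of \<open>K'\<close> cover \<open>X\<close>,
  and \<open>K'\<close> is compact as a finite union of homeomorphic images of \<open>K\<close>.\<close>

lemma continuous_action_restrict:
  assumes "continuous_action G X phi" and "H \<subseteq> carrier G"
  shows "continuous_action (G\<lparr>carrier := H\<rparr>) X phi"
proof -
  have "continuous_map (prod_topology (discrete_topology (carrier G)) X) X (\<lambda>(g, x). phi g x)"
    using assms(1) unfolding continuous_action_def by blast
  then have "continuous_map (subtopology (prod_topology (discrete_topology (carrier G)) X)
      (H \<times> topspace X)) X (\<lambda>(g, x). phi g x)"
    by (rule continuous_map_from_subtopology)
  then have "continuous_map (prod_topology (discrete_topology H) X) X (\<lambda>(g, x). phi g x)"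
    using assms(2) by (simp add: prod_topology_subtopology(1)[symmetric] Int_absorb1)
  with assms show ?thesis
    unfolding continuous_action_def by (auto simp: subset_iff)
qed

definition action_refinement :: "'b topology \<Rightarrow> ('a \<Rightarrow> 'b \<Rightarrow> 'b) \<Rightarrow> 'a set \<Rightarrow> 'b set set \<Rightarrow> 'b set set"
  where "action_refinement X phi F \<U> = (\<lambda>\<sigma>. {x \<in> topspace X. \<forall>f\<in>F. phi f x \<in> \<sigma> f}) ` (F \<rightarrow>\<^sub>E \<U>)"

lemma finite_action_refinement:
  "finite F \<Longrightarrow> finite \<U> \<Longrightarrow> finite (action_refinement X phi F \<U>)"
  unfolding action_refinement_def by (simp add: finite_PiE)

lemma openin_action_refinement:
  assumes "finite F" and "\<And>f. f \<in> F \<Longrightarrow> continuous_map X X (phi f)"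
    and "\<And>U. U \<in> \<U> \<Longrightarrow> openin X U" and "V \<in> action_refinement X phi F \<U>"
  shows "openin X V"
proof -
  obtain \<sigma> where \<sigma>: "\<sigma> \<in> F \<rightarrow>\<^sub>E \<U>" and V: "V = {x \<in> topspace X. \<forall>f\<in>F. phi f x \<in> \<sigma> f}"
    using assms(4) unfolding action_refinement_def by blast
  have "V = (\<Inter>f\<in>F. {x \<in> topspace X. phi f x \<in> \<sigma> f}) \<inter> topspace X"
    using V by auto
  also have "openin X \<dots>"
    using assms \<sigma> by (intro openin_INT openin_continuous_map_preimage) auto
  finally show ?thesis .
qed

lemma Union_action_refinement:
  assumes "\<And>f x. f \<in> F \<Longrightarrow> x \<in> topspace X \<Longrightarrow> phi f x \<in> topspace X"
    and "\<Union>\<U> = topspace X"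
  shows "\<Union>(action_refinement X phi F \<U>) = topspace X"
proof
  show "\<Union>(action_refinement X phi F \<U>) \<subseteq> topspace X"
    unfolding action_refinement_def by auto
  show "topspace X \<subseteq> \<Union>(action_refinement X phi F \<U>)"
  proof
    fix x assume x: "x \<in> topspace X"
    have "\<forall>f\<in>F. \<exists>U\<in>\<U>. phi f x \<in> U"
      using assms x by blast
    then obtain \<sigma> where \<sigma>: "\<forall>f\<in>F. \<sigma> f \<in> \<U> \<and> phi f x \<in> \<sigma> f"
      by metis
    then have "restrict \<sigma> F \<in> F \<rightarrow>\<^sub>E \<U>"
      and "x \<in> {x \<in> topspace X. \<forall>f\<in>F. phi f x \<in> restrict \<sigma> F f}"
      using x by auto
    then show "x \<in> \<Union>(action_refinement X phi F \<U>)"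
      unfolding action_refinement_def by blast
  qed
qed

lemma subordinate_action_refinement:
  assumes "subordinate A (action_refinement X phi F \<U>)" and "f \<in> F"
  shows "subordinate (phi f ` A) \<U>"
proof -
  obtain \<sigma> where "\<sigma> \<in> F \<rightarrow>\<^sub>E \<U>" and "A \<subseteq> {x \<in> topspace X. \<forall>f\<in>F. phi f x \<in> \<sigma> f}"
    using assms(1) unfolding subordinate_def action_refinement_def by blast
  with assms(2) have "\<sigma> f \<in> \<U>" and "phi f ` A \<subseteq> \<sigma> f"
    by auto
  then show ?thesis
    unfolding subordinate_def by blast
qed

context
  fixes G :: "('a, 'c) monoid_scheme" (structure) and X :: "'b topology" and phi :: "'a \<Rightarrow> 'b \<Rightarrow> 'b"
  assumes group: "group G" and action: "continuous_action G X phi"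
begin

interpretation group G by (rule group)

lemma action_closed: "g \<in> carrier G \<Longrightarrow> x \<in> topspace X \<Longrightarrow> phi g x \<in> topspace X"
  using action unfolding continuous_action_def by blast

lemma action_mult:
  "g \<in> carrier G \<Longrightarrow> h \<in> carrier G \<Longrightarrow> x \<in> topspace X \<Longrightarrow> phi (g \<otimes> h) x = phi g (phi h x)"
  using action unfolding continuous_action_def by blast

lemma action_inv_cancel: "g \<in> carrier G \<Longrightarrow> x \<in> topspace X \<Longrightarrow> phi (inv g) (phi g x) = x"
  using action action_mult[of "inv g" g x] unfolding continuous_action_def by simp

lemma continuous_map_action:
  assumes "g \<in> carrier G"
  shows "continuous_map X X (phi g)"
proof -
  have "continuous_map X (prod_topology (discrete_topology (carrier G)) X) (\<lambda>x. (g, x))"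
    using assms by (intro continuous_map_pairedI) auto
  moreover have "continuous_map (prod_topology (discrete_topology (carrier G)) X) X (\<lambda>(g, x). phi g x)"
    using action unfolding continuous_action_def by blast
  ultimately show ?thesis
    using continuous_map_compose by (fastforce simp: o_def)
qed

lemma compactin_action_translates:
  assumes "compactin X K" and "finite F" and "F \<subseteq> carrier G"
  shows "compactin X (\<Union>f\<in>F. phi (inv f) ` K)"
  using assms by (auto intro!: compactin_Union image_compactin continuous_map_action)

lemma subordinate_action_translate:
  assumes "F \<subseteq> carrier G" and "f \<in> F" and "K \<subseteq> topspace X"
    and "subordinate {x, y} (action_refinement X phi F \<U> \<union> {topspace X - (\<Union>f\<in>F. phi (inv f) ` K)})"
  shows "subordinate {phi f x, phi f y} (\<U> \<union> {topspace X - K})"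
proof (cases "subordinate {x, y} (action_refinement X phi F \<U>)")
  case True
  then show ?thesis
    using subordinate_action_refinement[OF True assms(2)] unfolding subordinate_def by auto
next
  case False
  with assms(4) have xy: "{x, y} \<subseteq> topspace X - (\<Union>f\<in>F. phi (inv f) ` K)"
    unfolding subordinate_def by blast
  have "phi f z \<notin> K" if "z \<in> {x, y}" for z
  proof
    assume "phi f z \<in> K"
    then have "phi (inv f) (phi f z) \<in> (\<Union>f\<in>F. phi (inv f) ` K)"
      using assms(2) by blast
    moreover have "phi (inv f) (phi f z) = z"
      using xy that assms(1,2) by (intro action_inv_cancel) auto
    ultimately show False
      using xy that by auto
  qed
  with xy assms(1,2) have "{phi f x, phi f y} \<subseteq> topspace X - K"
    using action_closed by auto
  then show ?thesis
    unfolding subordinate_def by blast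
qed

lemma subgroup_orbits_translates_eq_topspace:
  assumes "subgroup H G" and "F \<subseteq> carrier G" and "carrier G = {f \<otimes> h | f h. f \<in> F \<and> h \<in> H}"
    and "K \<subseteq> topspace X" and "{phi g x | g x. g \<in> carrier G \<and> x \<in> K} = topspace X"
  shows "{phi h x | h x. h \<in> H \<and> x \<in> (\<Union>f\<in>F. phi (inv f) ` K)} = topspace X"
proof
  show "{phi h x | h x. h \<in> H \<and> x \<in> (\<Union>f\<in>F. phi (inv f) ` K)} \<subseteq> topspace X"
  proof
    fix z assume "z \<in> {phi h x | h x. h \<in> H \<and> x \<in> (\<Union>f\<in>F. phi (inv f) ` K)}"
    then obtain h f k where "z = phi h (phi (inv f) k)" "h \<in> H" "f \<in> F" "k \<in> K"
      by blast
    then show "z \<in> topspace X"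
      using assms(2,4) subgroup.mem_carrier[OF assms(1)] by (auto intro!: action_closed)
  qed
  show "topspace X \<subseteq> {phi h x | h x. h \<in> H \<and> x \<in> (\<Union>f\<in>F. phi (inv f) ` K)}"
  proof
    fix x assume "x \<in> topspace X"
    then have "x \<in> {phi g x | g x. g \<in> carrier G \<and> x \<in> K}"
      unfolding assms(5) .
    then obtain g k where g: "g \<in> carrier G" and k: "k \<in> K" and x: "x = phi g k"
      by blast
    have "inv g \<in> {f \<otimes> h | f h. f \<in> F \<and> h \<in> H}"
      using g unfolding assms(3)[symmetric] by simp
    then obtain f h where f: "f \<in> F" and h: "h \<in> H" and gfh: "inv g = f \<otimes> h"
      by blast
    have fG: "f \<in> carrier G"
      using assms(2) f by blast
    have hG: "h \<in> carrier G"
      using subgroup.mem_carrier[OF assms(1) h] .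
    have "g = inv (inv g)"
      using g by simp
    also have "\<dots> = inv h \<otimes> inv f"
      unfolding gfh using fG hG by (rule inv_mult_group)
    finally have "x = phi (inv h) (phi (inv f) k)"
      using x k assms(4) action_mult[OF inv_closed[OF hG] inv_closed[OF fG]] by auto
    moreover have "inv h \<in> H"
      using subgroup.m_inv_closed[OF assms(1) h] .
    moreover have "phi (inv f) k \<in> (\<Union>f\<in>F. phi (inv f) ` K)"
      using f k by blast
    ultimately show "x \<in> {phi h x | h x. h \<in> H \<and> x \<in> (\<Union>f\<in>F. phi (inv f) ` K)}"
      by blast
  qed
qed

lemma subordinate_orbit_if_subgroup_orbit:
  assumes "H \<subseteq> carrier G" and "F \<subseteq> carrier G" and "carrier G = {f \<otimes> h | f h. f \<in> F \<and> h \<in> H}"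
    and "K \<subseteq> topspace X" and "x \<in> topspace X" and "y \<in> topspace X"
    and "\<forall>h\<in>H. subordinate {phi h x, phi h y}
      (action_refinement X phi F \<U> \<union> {topspace X - (\<Union>f\<in>F. phi (inv f) ` K)})"
    and "g \<in> carrier G"
  shows "subordinate {phi g x, phi g y} (\<U> \<union> {topspace X - K})"
proof -
  obtain f h where f: "f \<in> F" and h: "h \<in> H" and g: "g = f \<otimes> h"
    using assms(3,8) by blast
  have "subordinate {phi f (phi h x), phi f (phi h y)} (\<U> \<union> {topspace X - K})"
    using assms(7) h by (intro subordinate_action_translate[OF assms(2) f assms(4)]) simp
  moreover have "phi g z = phi f (phi h z)" if "z \<in> topspace X" for z
    using g f h assms(1,2) that by (auto intro: action_mult)
  ultimately show ?thesis
    using assms(5,6) by simp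
qed

lemma cocompactly_expansive_syndetic_subgroup:
  assumes "cocompactly_expansive G X phi" and "subgroup H G" and "syndetic G H"
  shows "cocompactly_expansive (G\<lparr>carrier := H\<rparr>) X phi"
proof -
  have HG: "H \<subseteq> carrier G"
    using assms(2) subgroup.subset by blast
  obtain \<U> K where \<U>: "finite \<U>" "\<forall>U\<in>\<U>. openin X U" "\<Union>\<U> = topspace X"
    and K: "compactin X K" "{phi g x | g x. g \<in> carrier G \<and> x \<in> K} = topspace X"
    and expansive: "\<forall>x\<in>topspace X. \<forall>y\<in>topspace X.
      (\<forall>g\<in>carrier G. subordinate {phi g x, phi g y} (\<U> \<union> {topspace X - K})) \<longrightarrow> x = y"
    using assms(1) unfolding cocompactly_expansive_def by (elim exE conjE) (rule that)
  obtain F where F: "finite F" "F \<subseteq> carrier G" and FH: "carrier G = {f \<otimes> h | f h. f \<in> F \<and> h \<in> H}"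
    using assms(3) unfolding syndetic_def by (elim exE conjE) (rule that)
  have KX: "K \<subseteq> topspace X"
    using K(1) compactin_subset_topspace by blast
  define \<V> where "\<V> = action_refinement X phi F \<U>"
  define K' where "K' = (\<Union>f\<in>F. phi (inv f) ` K)"
  have "finite \<V>"
    unfolding \<V>_def using F(1) \<U>(1) by (rule finite_action_refinement)
  moreover have "\<forall>V\<in>\<V>. openin X V"
    unfolding \<V>_def using F \<U>(2) by (auto intro: openin_action_refinement continuous_map_action)
  moreover have "\<Union>\<V> = topspace X"
    unfolding \<V>_def using F(2) \<U>(3) by (intro Union_action_refinement) (auto intro: action_closed)
  moreover have "compactin X K'"
    unfolding K'_def using K(1) F by (rule compactin_action_translates)
  moreover have "{phi h x | h x. h \<in> carrier (G\<lparr>carrier := H\<rparr>) \<and> x \<in> K'} = topspace X"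
    unfolding K'_def using subgroup_orbits_translates_eq_topspace[OF assms(2) F(2) FH KX K(2)] by simp
  moreover have "\<forall>x\<in>topspace X. \<forall>y\<in>topspace X.
      (\<forall>h\<in>carrier (G\<lparr>carrier := H\<rparr>). subordinate {phi h x, phi h y} (\<V> \<union> {topspace X - K'})) \<longrightarrow> x = y"
  proof (intro ballI impI)
    fix x y assume xy: "x \<in> topspace X" "y \<in> topspace X"
      and "\<forall>h\<in>carrier (G\<lparr>carrier := H\<rparr>). subordinate {phi h x, phi h y} (\<V> \<union> {topspace X - K'})"
    then have "\<forall>h\<in>H. subordinate {phi h x, phi h y}
      (action_refinement X phi F \<U> \<union> {topspace X - (\<Union>f\<in>F. phi (inv f) ` K)})"
      unfolding \<V>_def K'_def by simp
    then have "\<forall>g\<in>carrier G. subordinate {phi g x, phi g y} (\<U> \<union> {topspace X - K})"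
      using subordinate_orbit_if_subgroup_orbit[OF HG F(2) FH KX xy] by blast
    with expansive xy show "x = y"
      by blast
  qed
  ultimately show ?thesis
    unfolding cocompactly_expansive_def by (intro exI[of _ \<V>] exI[of _ K'] conjI)
qed

end

theorem mainTheorem2:
  fixes G :: "('a, 'c) monoid_scheme" and X :: "'b topology" and phi :: "'a \<Rightarrow> 'b \<Rightarrow> 'b"
    and H :: "'a set"
  assumes "group G"
    and "continuous_action G X phi"
    and "cocompactly_expansive G X phi"
    and "subgroup H G"
    and "syndetic G H"
  shows "continuous_action (G\<lparr>carrier := H\<rparr>) X phi \<and> cocompactly_expansive (G\<lparr>carrier := H\<rparr>) X phi"
proof
  have "H \<subseteq> carrier G"
    using assms(4) subgroup.subset by blast
  with assms(2) show "continuous_action (G\<lparr>carrier := H\<rparr>) X phi"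
    by (rule continuous_action_restrict)
  show "cocompactly_expansive (G\<lparr>carrier := H\<rparr>) X phi"
    using assms by (rule cocompactly_expansive_syndetic_subgroup)
qed

end
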